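(* Let $n=2e$ be even and consider a collection of disjoint decorated circularly ordered subsets of $\mathbb{Z}_n$ covering $\mathbb{Z}_n$ (each element of $\mathbb{Z}_n$ occurring in exactly one subset, with a decoration $+$ or $-$). This collection is a vertex set (i.e., it is the set of vertices induced by a signed planar diagram of the $n$-gon all of whose vertices have degree at least $3$) if and only if the following conditions hold: (1) each subset has at least three corners; (2) for no $i\in\mathbb{Z}_n$ is $i_+(i+1)_+\cdots$ a subset; (3) if $i_+j_+\cdots$ is a subset then $(j-1)_+(i+1)_+\cdots$ is a subset, and if $i_+j_-\cdots$ is a subset then $(i+1)_-(j+1)_+\cdots$ is a subset.
   Context: The corners of an $n$-gon are labelled by $i\in\mathbb{Z}_n$ in circular order, and $\bar i$ denotes the edge from corner $i$ to corner $i+1$. A (signed) planar diagram is a partition of the $n$ edges into $n/2$ unordered pairs, each pair carrying a sign: $\{\bar i,\bar j\}_+$ (opposing pair, glued orientation-compatibly) or $\{\bar i,\bar j\}_-$ (twisted pair); glueing gives a single-tile tiling of a closed surface. A decorated corner is a symbol $i_\pm$ with $i\in\mathbb{Z}_n$. A decorated circularly ordered subset is a cyclic sequence of decorated corners with distinct underlying corners, considered up to rotation (keeping decorations) and up to reversing the cyclic order while simultaneously changing every decoration $\pm$ to $\mp$. We say "$a_\alpha b_\beta\cdots$ is a subset" if some subset has a representative in which $a_\alpha$ is immediately followed (cyclically) by $b_\beta$. A planar diagram $D$ induces vertices by the successor rules: $i_+$ is followed by $(j+1)_+$ if $\{\bar i,\bar j\}_+\in D$, and by $j_-$ if $\{\bar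 i,\bar j\}_-\in D$; $i_-$ is followed by $(j+1)_+$ if $\{\overline{i-1},\bar j\}_-\in D$, and by $j_-$ if $\{\overline{i-1},\bar j\}_+\in D$. Starting from any decorated corner and following these rules until returning yields a vertex (a decorated circularly ordered subset); the degree of a vertex is its number of corners. A vertex set is the collection of vertices induced in this way by a planar diagram all of whose vertices have degree at least $3$. *)

theory Defs
  imports Main
begin

text \<open>Corners and edges of the n-gon are represented by naturals in {0..<n}; arithmetic is
  taken mod n. Edge i (written bar i in the paper) goes from corner i to corner i+1.
  A decorated corner is a pair (i, d) with d = True meaning i_+ and d = False meaning i_-.\<close>

type_synonym dcorner = "nat \<times> bool"

text \<open>A signed planar diagram: p is the fixed-point-free involution pairing the edges,
  s gives the sign of the pair (True = opposing pair {.,.}_+, False = twisted pair {.,.}_-).\<close>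

definition signed_diagram :: "nat \<Rightarrow> (nat \<Rightarrow> nat) \<Rightarrow> (nat \<Rightarrow> bool) \<Rightarrow> bool" where
  "signed_diagram n p s \<longleftrightarrow>
     (\<forall>i<n. p i < n \<and> p i \<noteq> i \<and> p (p i) = i \<and> s (p i) = s i)"

definition succ_corner :: "nat \<Rightarrow> (nat \<Rightarrow> nat) \<Rightarrow> (nat \<Rightarrow> bool) \<Rightarrow> dcorner \<Rightarrow> dcorner" where
  "succ_corner n p s x =
     (let i = fst x in
      if snd x then
        (if s i then ((p i + 1) mod n, True) else (p i, False))
      else
        (let k = (i + n - 1) mod n in
         if s k then (p k, False) else ((p k + 1) mod n, True)))"

definition orbit_period :: "nat \<Rightarrow> (nat \<Rightarrow> nat) \<Rightarrow> (nat \<Rightarrow> bool) \<Rightarrow> dcorner \<Rightarrow> nat" where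
  "orbit_period n p s x = (LEAST m. 0 < m \<and> (succ_corner n p s ^^ m) x = x)"

definition orbit_list :: "nat \<Rightarrow> (nat \<Rightarrow> nat) \<Rightarrow> (nat \<Rightarrow> bool) \<Rightarrow> dcorner \<Rightarrow> dcorner list" where
  "orbit_list n p s x = map (\<lambda>k. (succ_corner n p s ^^ k) x) [0..<orbit_period n p s x]"

text \<open>Decorated circularly ordered subsets: cyclic sequences (lists) up to rotation and up to
  reversal together with flipping all decorations.\<close>

definition dflip :: "dcorner \<Rightarrow> dcorner" where
  "dflip x = (fst x, \<not> snd x)"

definition dc_class :: "dcorner list \<Rightarrow> dcorner list set" where
  "dc_class xs = {ys. \<exists>k. ys = rotate k xs \<or> ys = rotate k (map dflip (rev xs))}"

definition dc_corners :: "dcorner list set \<Rightarrow> nat set" where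
  "dc_corners c = (\<Union>xs\<in>c. fst ` set xs)"

definition dc_collection :: "nat \<Rightarrow> dcorner list set set \<Rightarrow> bool" where
  "dc_collection n C \<longleftrightarrow>
     (\<forall>c\<in>C. \<exists>xs. c = dc_class xs \<and> distinct (map fst xs) \<and> fst ` set xs \<subseteq> {0..<n}) \<and>
     (\<forall>i<n. \<exists>!c. c \<in> C \<and> i \<in> dc_corners c)"

text \<open>"a b ... is a subset": some subset has a representative in which a is immediately
  followed (cyclically) by b.\<close>

definition dc_follows :: "dcorner list set set \<Rightarrow> dcorner \<Rightarrow> dcorner \<Rightarrow> bool" where
  "dc_follows C a b \<longleftrightarrow>
     (\<exists>c\<in>C. \<exists>xs\<in>c. \<exists>k<length xs. xs ! k = a \<and> xs ! (Suc k mod length xs) = b)"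

definition diagram_vertices :: "nat \<Rightarrow> (nat \<Rightarrow> nat) \<Rightarrow> (nat \<Rightarrow> bool) \<Rightarrow> dcorner list set set" where
  "diagram_vertices n p s = {dc_class (orbit_list n p s x) | x. fst x < n}"

definition is_vertex_set :: "nat \<Rightarrow> dcorner list set set \<Rightarrow> bool" where
  "is_vertex_set n C \<longleftrightarrow>
     (\<exists>p s. signed_diagram n p s \<and>
        (\<forall>x. fst x < n \<longrightarrow> 3 \<le> length (orbit_list n p s x)) \<and>
        C = diagram_vertices n p s)"

end

theory Submission
  imports Defs
begin

text \<open>The successor rules define a map succ on decorated corners, and the vertices of a
  diagram are the cycles of succ. Since succ (dflip (succ x)) = dflip x, reading a cycle
  backwards with flipped decorations follows succ again, so a is followed by b in the vertex
  set exactly when b = succ a. In these terms condition (2) says that no edge is paired with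
  itself, and (3) compares the successor of i_+ with those of (p i)_+ and (i+1)_-.

  Conversely, in a collection of disjoint subsets with distinct corners every decorated corner
  has a unique follower. The follower of i_+ determines a partner and a sign for edge i:
  j_+ pairs edge i opposingly with edge j - 1, and j_- pairs it twistedly with edge j.
  Conditions (2) and (3) make this a signed diagram whose successor map is the follower map,
  so its vertices are the given subsets, of degree at least 3 by (1).\<close>

definition cyclic_next :: "'a list \<Rightarrow> 'a \<Rightarrow> 'a \<Rightarrow> bool" where
  "cyclic_next xs a b \<longleftrightarrow> (\<exists>k<length xs. xs ! k = a \<and> xs ! (Suc k mod length xs) = b)"

lemma Suc_mod_less [simp]: "k < (l::nat) \<Longrightarrow> Suc k mod l < l"
  by (rule mod_less_divisor) simp

lemma dc_follows_iff_cyclic_next: "dc_follows C a b \<longleftrightarrow> (\<exists>c\<in>C. \<exists>xs\<in>c. cyclic_next xs a b)"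
  unfolding dc_follows_def cyclic_next_def ..

lemma cyclic_next_nth: "k < length xs \<Longrightarrow> cyclic_next xs (xs ! k) (xs ! (Suc k mod length xs))"
  unfolding cyclic_next_def by blast

lemma cyclic_next_set: "cyclic_next xs a b \<Longrightarrow> a \<in> set xs \<and> b \<in> set xs"
  unfolding cyclic_next_def by (metis length_pos_if_in_set mod_less_divisor nth_mem)

lemma cyclic_next_rotate_imp: "cyclic_next (rotate m xs) a b \<Longrightarrow> cyclic_next xs a b"
proof -
  assume "cyclic_next (rotate m xs) a b"
  then obtain k where k: "k < length xs" "rotate m xs ! k = a" "rotate m xs ! (Suc k mod length xs) = b"
    unfolding cyclic_next_def by auto
  have l0: "0 < length xs" using k(1) by linarith
  let ?k = "(m + k) mod length xs"
  have a: "xs ! ?k = a" using k by (simp add: nth_rotate)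
  have "rotate m xs ! (Suc k mod length xs) = xs ! ((m + Suc k mod length xs) mod length xs)"
    using k(1) by (intro nth_rotate) simp_all
  then have "xs ! (Suc ?k mod length xs) = b"
    using k(3) by (simp add: mod_Suc_eq mod_add_right_eq)
  with a show ?thesis using cyclic_next_nth[of ?k xs] l0 by simp
qed

lemma rotate_inverse_ex: "\<exists>m'. rotate m' (rotate m xs) = xs"
proof (cases "xs = []")
  case False
  then have "(length xs - m mod length xs + m) mod length xs = 0"
    by (metis le_add_diff_inverse2 mod_add_right_eq mod_le_divisor mod_self length_greater_0_conv)
  then have "rotate (length xs - m mod length xs) (rotate m xs) = xs"
    by (simp add: rotate_rotate)
  then show ?thesis ..
qed simp

lemma cyclic_next_rotate [simp]: "cyclic_next (rotate m xs) a b \<longleftrightarrow> cyclic_next xs a b"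
  by (metis cyclic_next_rotate_imp rotate_inverse_ex)

lemma cyclic_next_rev_imp: "cyclic_next xs b a \<Longrightarrow> cyclic_next (rev xs) a b"
proof -
  assume "cyclic_next xs b a"
  then obtain k where k: "k < length xs" "xs ! k = b" "xs ! (Suc k mod length xs) = a"
    unfolding cyclic_next_def by auto
  let ?l = "length xs"
  let ?j = "?l - Suc (Suc k mod ?l)"
  have q: "Suc k mod ?l < ?l" using k(1) by simp
  then have j: "?j < ?l" by linarith
  moreover have "?l - Suc ?j = Suc k mod ?l" using q by linarith
  then have "rev xs ! ?j = a" unfolding rev_nth[OF j] using k(3) by simp
  moreover have "rev xs ! (Suc ?j mod ?l) = b"
  proof (cases "Suc k < ?l")
    case True
    then show ?thesis using k by (simp add: rev_nth Suc_diff_Suc)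
  next
    case False
    then have "length xs = Suc k" using k(1) by simp
    then show ?thesis using k by (simp add: rev_nth)
  qed
  ultimately show ?thesis unfolding cyclic_next_def by auto
qed

lemma cyclic_next_rev: "cyclic_next (rev xs) a b \<longleftrightarrow> cyclic_next xs b a"
  by (metis cyclic_next_rev_imp rev_rev_ident)

lemma cyclic_next_map_inj:
  "inj f \<Longrightarrow> cyclic_next (map f xs) (f a) (f b) \<longleftrightarrow> cyclic_next xs a b"
  unfolding cyclic_next_def by (auto simp: inj_eq)

definition revflip :: "dcorner list \<Rightarrow> dcorner list" where
  "revflip xs = map dflip (rev xs)"

lemma dflip_dflip [simp]: "dflip (dflip x) = x"
  by (simp add: dflip_def)

lemma dflip_neq [simp]: "dflip x \<noteq> x" "x \<noteq> dflip x"
  by (simp_all add: dflip_def prod_eq_iff)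

lemma fst_dflip [simp]: "fst (dflip x) = fst x"
  by (simp add: dflip_def)

lemma inj_dflip: "inj dflip"
  by (metis injI dflip_dflip)

lemma fst_eq_imp_eq_or_dflip: "fst x = fst y \<Longrightarrow> y = x \<or> y = dflip x"
  by (cases x; cases y) (auto simp: dflip_def)

lemma revflip_revflip [simp]: "revflip (revflip xs) = xs"
  by (simp add: revflip_def rev_map comp_def)

lemma length_revflip [simp]: "length (revflip xs) = length xs"
  by (simp add: revflip_def)

lemma mem_revflip_iff: "x \<in> set (revflip xs) \<longleftrightarrow> dflip x \<in> set xs"
  by (force simp: revflip_def)

lemma map_fst_revflip: "map fst (revflip xs) = rev (map fst xs)"
  by (simp add: revflip_def rev_map comp_def)

lemma revflip_rotate: "\<exists>m'. revflip (rotate m xs) = rotate m' (revflip xs)"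
proof -
  have "rev (rotate m xs) = rotate (length xs - m mod length xs) (rev xs)"
  proof (cases "xs = [] \<or> m mod length xs = 0")
    case False
    then have "(length xs - m mod length xs) mod length xs = length xs - m mod length xs"
      by simp
    then show ?thesis using False by (simp add: rotate_rev rotate_conv_mod[symmetric])
  qed (auto simp: rotate_rev)
  then show ?thesis by (auto simp: revflip_def rotate_map)
qed

lemma cyclic_next_revflip: "cyclic_next (revflip xs) a b \<longleftrightarrow> cyclic_next xs (dflip b) (dflip a)"
  using cyclic_next_map_inj[OF inj_dflip, of "rev xs" "dflip a" "dflip b"]
  by (simp add: revflip_def cyclic_next_rev)

lemma mem_dc_class_iff: "ys \<in> dc_class xs \<longleftrightarrow> (\<exists>k. ys = rotate k xs \<or> ys = rotate k (revflip xs))"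
  by (simp add: dc_class_def revflip_def)

lemma rotate_mem_dc_class: "rotate k xs \<in> dc_class xs"
  by (auto simp: mem_dc_class_iff)

lemma rotate_revflip_mem_dc_class: "rotate k (revflip xs) \<in> dc_class xs"
  by (auto simp: mem_dc_class_iff)

lemma dc_class_rotate_subset: "dc_class (rotate k xs) \<subseteq> dc_class xs"
proof
  fix ys assume "ys \<in> dc_class (rotate k xs)"
  then obtain j where "ys = rotate j (rotate k xs) \<or> ys = rotate j (revflip (rotate k xs))"
    by (auto simp: mem_dc_class_iff)
  moreover obtain m where "revflip (rotate k xs) = rotate m (revflip xs)"
    using revflip_rotate by blast
  ultimately show "ys \<in> dc_class xs"
    by (auto simp: rotate_rotate rotate_mem_dc_class rotate_revflip_mem_dc_class)
qed

lemma dc_class_rotate [simp]: "dc_class (rotate k xs) = dc_class xs"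
proof
  obtain m where "rotate m (rotate k xs) = xs" using rotate_inverse_ex by blast
  then show "dc_class xs \<subseteq> dc_class (rotate k xs)"
    using dc_class_rotate_subset[of m "rotate k xs"] by simp
qed (rule dc_class_rotate_subset)

lemma dc_class_revflip_subset: "dc_class (revflip xs) \<subseteq> dc_class xs"
  by (auto simp: mem_dc_class_iff rotate_mem_dc_class rotate_revflip_mem_dc_class)

lemma dc_class_revflip [simp]: "dc_class (revflip xs) = dc_class xs"
  by (metis dc_class_revflip_subset revflip_revflip subset_antisym)

lemma dc_class_eq: "ys \<in> dc_class xs \<Longrightarrow> dc_class ys = dc_class xs"
  by (auto simp: mem_dc_class_iff)

lemma self_mem_dc_class: "xs \<in> dc_class xs"
  using rotate_mem_dc_class[of 0 xs] by simp

lemma revflip_mem_dc_class: "revflip xs \<in> dc_class xs"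
  using rotate_revflip_mem_dc_class[of 0 xs] by simp

lemma dc_class_invariants:
  assumes "ys \<in> dc_class xs"
  shows "length ys = length xs" "fst ` set ys = fst ` set xs"
    "distinct (map fst ys) \<longleftrightarrow> distinct (map fst xs)"
  using assms
  by (auto simp: mem_dc_class_iff map_fst_revflip rotate_map[symmetric] image_iff
      simp flip: set_map)

lemma bex_dc_class_cyclic_next:
  "(\<exists>ys\<in>dc_class xs. cyclic_next ys a b) \<longleftrightarrow> cyclic_next xs a b \<or> cyclic_next (revflip xs) a b"
  using self_mem_dc_class revflip_mem_dc_class by (fastforce simp: mem_dc_class_iff)

lemma cyclic_next_right_unique:
  assumes "distinct xs" "cyclic_next xs a b" "cyclic_next xs a b'"
  shows "b = b'"
proof -
  obtain k k' where k: "k < length xs" "xs ! k = a" "xs ! (Suc k mod length xs) = b"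
    and k': "k' < length xs" "xs ! k' = a" "xs ! (Suc k' mod length xs) = b'"
    using assms(2,3) unfolding cyclic_next_def by blast
  then have "k = k'" using nth_eq_iff_index_eq[OF assms(1) k(1) k'(1)] by simp
  then show ?thesis using k k' by simp
qed

lemma cyclic_next_neq:
  assumes "distinct xs" "2 \<le> length xs" "cyclic_next xs a b"
  shows "a \<noteq> b"
proof
  assume "a = b"
  from assms(3) obtain k where k: "k < length xs" "xs ! k = a" "xs ! (Suc k mod length xs) = b"
    unfolding cyclic_next_def by blast
  then have "xs ! (Suc k mod length xs) = xs ! k" using \<open>a = b\<close> by simp
  then have "Suc k mod length xs = k"
    using nth_eq_iff_index_eq[OF assms(1) Suc_mod_less[OF k(1)] k(1)] by blast
  show False
  proof (cases "Suc k < length xs")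
    case True
    then show False using \<open>Suc k mod length xs = k\<close> by simp
  next
    case False
    then have "length xs = Suc k" using k(1) by simp
    then show False using \<open>Suc k mod length xs = k\<close> assms(2) by simp
  qed
qed

lemma hd_rotate_eq: "x \<in> set xs \<Longrightarrow> \<exists>k. hd (rotate k xs) = x"
proof -
  assume "x \<in> set xs"
  then obtain k where "k < length xs" "xs ! k = x" by (auto simp: in_set_conv_nth)
  moreover have "xs \<noteq> []" using \<open>x \<in> set xs\<close> by auto
  ultimately have "hd (rotate k xs) = x" by (simp add: hd_rotate_conv_nth)
  then show ?thesis ..
qed

lemma dc_class_starting_at:
  assumes "fst x \<in> fst ` set xs"
  shows "\<exists>ys\<in>dc_class xs. hd ys = x"
proof -
  from assms obtain y where "y \<in> set xs" and "fst y = fst x" by auto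
  from this(2) have "x = y \<or> x = dflip y" by (rule fst_eq_imp_eq_or_dflip)
  then have "x \<in> set xs \<or> x \<in> set (revflip xs)"
    using \<open>y \<in> set xs\<close> by (auto simp: mem_revflip_iff)
  then show ?thesis
  proof
    assume "x \<in> set xs"
    from hd_rotate_eq[OF this] obtain k where "hd (rotate k xs) = x" ..
    then show ?thesis using rotate_mem_dc_class by (rule bexI)
  next
    assume "x \<in> set (revflip xs)"
    from hd_rotate_eq[OF this] obtain k where "hd (rotate k (revflip xs)) = x" ..
    then show ?thesis using rotate_revflip_mem_dc_class by (rule bexI)
  qed
qed

lemma dc_class_successor_unique:
  assumes dist: "distinct (map fst xs)"
    and b: "\<exists>ys\<in>dc_class xs. cyclic_next ys a b" and b': "\<exists>ys\<in>dc_class xs. cyclic_next ys a b'"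
  shows "b = b'"
  \<comment> \<open>As the corners of xs are distinct, a lies in exactly one of xs and revflip xs.\<close>
proof (cases "a \<in> set xs")
  case True
  have "a \<notin> set (revflip xs)"
  proof
    assume "a \<in> set (revflip xs)"
    then have "dflip a \<in> set xs" by (simp add: mem_revflip_iff)
    moreover have "inj_on fst (set xs)" using dist by (simp add: distinct_map)
    ultimately have "dflip a = a" using inj_onD[of fst "set xs" "dflip a" a] True by simp
    then show False by simp
  qed
  then have "\<not> cyclic_next (revflip xs) a c" for c using cyclic_next_set by metis
  then have "cyclic_next xs a b" "cyclic_next xs a b'"
    using b b' unfolding bex_dc_class_cyclic_next by simp_all
  moreover have "distinct xs" using dist by (simp add: distinct_map)
  ultimately show ?thesis using cyclic_next_right_unique by metis
next
  case False
  then have "\<not> cyclic_next xs a c" for c using cyclic_next_set by metis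
  then have "cyclic_next (revflip xs) a b" "cyclic_next (revflip xs) a b'"
    using b b' unfolding bex_dc_class_cyclic_next by simp_all
  moreover have "distinct (map fst (revflip xs))" using dist by (simp add: map_fst_revflip)
  then have "distinct (revflip xs)" by (simp add: distinct_map)
  ultimately show ?thesis using cyclic_next_right_unique by metis
qed

lemma dc_corners_dc_class: "dc_corners (dc_class xs) = fst ` set xs"
proof -
  have "dc_corners (dc_class xs) = (\<Union>ys\<in>dc_class xs. fst ` set xs)"
    unfolding dc_corners_def by (rule SUP_cong) (simp_all add: dc_class_invariants(2))
  then show ?thesis using self_mem_dc_class by (auto simp only: UN_constant split: if_splits)
qed

locale dc_partition =
  fixes n :: nat and C :: "dcorner list set set"
  assumes coll: "dc_collection n C"
begin

lemma dc_collection_memE: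
  assumes "c \<in> C"
  obtains xs where "c = dc_class xs" "distinct (map fst xs)" "fst ` set xs \<subseteq> {0..<n}"
proof -
  have "\<forall>c\<in>C. \<exists>xs. c = dc_class xs \<and> distinct (map fst xs) \<and> fst ` set xs \<subseteq> {0..<n}"
    using coll unfolding dc_collection_def by (rule conjunct1)
  then show thesis using assms that by blast
qed

lemma dc_collection_partition:
  assumes "i < n"
  shows "\<exists>!c. c \<in> C \<and> i \<in> dc_corners c"
proof -
  have "\<forall>i<n. \<exists>!c. c \<in> C \<and> i \<in> dc_corners c"
    using coll unfolding dc_collection_def by (rule conjunct2)
  then show ?thesis using assms by simp
qed

lemma dc_collection_coverE:
  assumes "i < n"
  obtains xs where "dc_class xs \<in> C" "distinct (map fst xs)" "i \<in> fst ` set xs"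
proof -
  obtain c where c: "c \<in> C" "i \<in> dc_corners c"
    using dc_collection_partition[OF assms] by blast
  then obtain xs where "c = dc_class xs" "distinct (map fst xs)"
    by (elim dc_collection_memE)
  then show thesis using c by (intro that) (simp_all add: dc_corners_dc_class)
qed

lemma dc_collection_class_unique:
  assumes "i < n" "dc_class xs \<in> C" "dc_class ys \<in> C" "i \<in> fst ` set xs" "i \<in> fst ` set ys"
  shows "dc_class xs = dc_class ys"
proof -
  have "(THE c. c \<in> C \<and> i \<in> dc_corners c) = dc_class xs"
    using dc_collection_partition[OF assms(1)] by (rule the1_equality) (simp add: assms dc_corners_dc_class)
  moreover have "(THE c. c \<in> C \<and> i \<in> dc_corners c) = dc_class ys"
    using dc_collection_partition[OF assms(1)] by (rule the1_equality) (simp add: assms dc_corners_dc_class)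
  ultimately show ?thesis by simp
qed

lemma dc_followsE:
  assumes "dc_follows C a b"
  obtains xs where "dc_class xs \<in> C" "distinct (map fst xs)" "fst ` set xs \<subseteq> {0..<n}"
    "\<exists>ys\<in>dc_class xs. cyclic_next ys a b" "fst a \<in> fst ` set xs" "fst b \<in> fst ` set xs"
proof -
  obtain c ys where c: "c \<in> C" "ys \<in> c" "cyclic_next ys a b"
    using assms unfolding dc_follows_iff_cyclic_next by blast
  obtain xs where xs: "c = dc_class xs" "distinct (map fst xs)" "fst ` set xs \<subseteq> {0..<n}"
    using dc_collection_memE[OF c(1)] by blast
  have "fst a \<in> fst ` set ys" "fst b \<in> fst ` set ys"
    using cyclic_next_set[OF c(3)] by auto
  moreover have "fst ` set ys = fst ` set xs"
    using c(2) xs(1) dc_class_invariants(2) by simp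
  ultimately show thesis using c xs by (intro that) auto
qed

lemma dc_follows_fst_less: "dc_follows C a b \<Longrightarrow> fst a < n \<and> fst b < n"
  by (erule dc_followsE) auto

lemma dc_follows_unique:
  assumes "dc_follows C a b" "dc_follows C a b'"
  shows "b = b'"
proof -
  obtain xs where xs: "dc_class xs \<in> C" "distinct (map fst xs)"
      "\<exists>ys\<in>dc_class xs. cyclic_next ys a b" "fst a \<in> fst ` set xs"
    using assms(1) by (elim dc_followsE)
  obtain xs' where xs': "dc_class xs' \<in> C"
      "\<exists>ys\<in>dc_class xs'. cyclic_next ys a b'" "fst a \<in> fst ` set xs'"
    using assms(2) by (elim dc_followsE)
  have "fst a < n" using assms(1) dc_follows_fst_less by blast
  then have "dc_class xs' = dc_class xs"
    using dc_collection_class_unique xs(1,4) xs'(1,3) by blast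
  then show "b = b'" using dc_class_successor_unique[OF xs(2,3)] xs'(2) by simp
qed

lemma dc_follows_exists:
  assumes "fst a < n"
  shows "\<exists>b. dc_follows C a b"
proof -
  obtain xs where xs: "dc_class xs \<in> C" "fst a \<in> fst ` set xs"
    using assms by (elim dc_collection_coverE)
  then obtain ys where ys: "ys \<in> dc_class xs" "hd ys = a"
    using dc_class_starting_at by blast
  have "ys \<noteq> []" using ys(1) xs(2) dc_class_invariants(1) by force
  then have "cyclic_next ys a (ys ! (1 mod length ys))"
    using cyclic_next_nth[of 0 ys] ys(2) by (simp add: hd_conv_nth)
  then show ?thesis using xs(1) ys(1) unfolding dc_follows_iff_cyclic_next by blast
qed

lemma dc_follows_dflip:
  assumes "dc_follows C a b"
  shows "dc_follows C (dflip b) (dflip a)"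
proof -
  obtain c ys where c: "c \<in> C" "ys \<in> c" "cyclic_next ys a b"
    using assms unfolding dc_follows_iff_cyclic_next by blast
  obtain xs where "c = dc_class xs" using dc_collection_memE[OF c(1)] by blast
  then have "dc_class ys = c" using c(2) dc_class_eq by simp
  then have "revflip ys \<in> c" using revflip_mem_dc_class by blast
  moreover have "cyclic_next (revflip ys) (dflip b) (dflip a)"
    using c(3) by (simp add: cyclic_next_revflip)
  ultimately show ?thesis using c(1) unfolding dc_follows_iff_cyclic_next by blast
qed

lemma dc_follows_fst_neq:
  assumes "\<forall>c\<in>C. \<forall>xs\<in>c. 2 \<le> length xs" "dc_follows C a b"
  shows "fst a \<noteq> fst b"
proof -
  obtain c ys where c: "c \<in> C" "ys \<in> c" "cyclic_next ys a b"
    using assms(2) unfolding dc_follows_iff_cyclic_next by blast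
  obtain xs where "c = dc_class xs" "distinct (map fst xs)"
    using dc_collection_memE[OF c(1)] by blast
  then have "distinct (map fst ys)" using c(2) dc_class_invariants(3) by simp
  moreover have "2 \<le> length ys" using assms(1) c(1,2) by blast
  ultimately have "a \<noteq> b" "inj_on fst (set ys)"
    using cyclic_next_neq[OF _ _ c(3)] by (simp_all add: distinct_map)
  show ?thesis
  proof
    assume "fst a = fst b"
    with \<open>inj_on fst (set ys)\<close> have "a = b"
      using cyclic_next_set[OF c(3)] by (auto dest: inj_onD)
    with \<open>a \<noteq> b\<close> show False ..
  qed
qed

definition follower :: "dcorner \<Rightarrow> dcorner" where
  "follower a = (THE b. dc_follows C a b)"

lemma dc_follows_follower: "fst a < n \<Longrightarrow> dc_follows C a (follower a)"
  unfolding follower_def using dc_follows_exists dc_follows_unique by (metis theI)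

lemma follower_eqI: "dc_follows C a b \<Longrightarrow> follower a = b"
  using dc_follows_follower dc_follows_fst_less dc_follows_unique by blast

end

section \<open>The vertices of a signed diagram\<close>

lemma pred_mod_succ_mod: "i < n \<Longrightarrow> ((i + n - 1) mod n + 1) mod n = (i::nat)"
  by (cases i) (auto simp: mod_Suc)

lemma succ_mod_pred_mod: "i < n \<Longrightarrow> ((i + 1) mod n + n - 1) mod n = (i::nat)"
  by (cases "Suc i = n") (auto simp: mod_Suc)

lemma finite_inj_on_funpow_periodic:
  assumes "finite D" "inj_on f D" "f ` D \<subseteq> D" "x \<in> D"
  shows "\<exists>m>0. (f ^^ m) x = x"
proof -
  \<comment> \<open>Extended by the identity outside D, f becomes globally injective.\<close>
  define g where "g y = (if y \<in> D then f y else y)" for y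
  have "inj g"
    using assms(2,3) by (auto simp: g_def inj_def inj_on_eq_iff split: if_splits)
  have g_f: "(g ^^ k) x = (f ^^ k) x \<and> (f ^^ k) x \<in> D" for k
    using assms(3,4) by (induction k) (auto simp: g_def)
  then have "{y. \<exists>k. y = (g ^^ k) x} \<subseteq> D" by auto
  then have "finite {y. \<exists>k. y = (g ^^ k) x}" using assms(1) by (rule finite_subset)
  with \<open>inj g\<close> obtain m where "m > 0" "(g ^^ m) x = x" by (rule funpow_inj_finite)
  then show ?thesis using g_f by auto
qed

lemma orbit_list_eqI:
  assumes "distinct ys" "ys \<noteq> []" "hd ys = x"
    and step: "\<forall>j<length ys. succ_corner n p s (ys ! j) = ys ! (Suc j mod length ys)"
  shows "orbit_list n p s x = ys"
proof -
  let ?f = "succ_corner n p s" and ?l = "length ys"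
  have pow: "(?f ^^ j) x = ys ! j" if "j < ?l" for j
    using that
  proof (induction j)
    case 0
    then show ?case using assms(2,3) by (simp add: hd_conv_nth)
  next
    case (Suc j)
    then show ?case using step by simp
  qed
  have "(?f ^^ ?l) x = x"
  proof -
    obtain l' where l': "?l = Suc l'" using assms(2) by (cases ys) auto
    then have "(?f ^^ ?l) x = ys ! (Suc l' mod ?l)" using pow step by simp
    also have "\<dots> = x" using l' assms(2,3) by (simp add: hd_conv_nth)
    finally show ?thesis .
  qed
  moreover have "(?f ^^ m) x \<noteq> x" if "0 < m" "m < ?l" for m
  proof -
    have "ys ! m \<noteq> ys ! 0"
      using that nth_eq_iff_index_eq[OF assms(1) that(2), of 0] assms(2) by simp
    then show ?thesis using that pow[of m] assms(2,3) by (simp add: hd_conv_nth)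
  qed
  ultimately have "orbit_period n p s x = ?l"
    unfolding orbit_period_def using assms(2)
    by (intro Least_equality) (auto simp: not_less[symmetric])
  then show ?thesis
    by (intro nth_equalityI) (simp_all add: orbit_list_def pow)
qed

definition vertex_set_conditions :: "nat \<Rightarrow> dcorner list set set \<Rightarrow> bool" where
  "vertex_set_conditions n C \<longleftrightarrow>
     (\<forall>c\<in>C. \<forall>xs\<in>c. 3 \<le> length xs) \<and>
     \<not> (\<exists>i<n. dc_follows C (i, True) ((i + 1) mod n, True)) \<and>
     (\<forall>i<n. \<forall>j<n. dc_follows C (i, True) (j, True) \<longrightarrow>
        dc_follows C ((j + n - 1) mod n, True) ((i + 1) mod n, True)) \<and>
     (\<forall>i<n. \<forall>j<n. dc_follows C (i, True) (j, False) \<longrightarrow>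
        dc_follows C ((i + 1) mod n, False) ((j + 1) mod n, True))"

locale planar_diagram =
  fixes n :: nat and p :: "nat \<Rightarrow> nat" and s :: "nat \<Rightarrow> bool"
  assumes sd: "signed_diagram n p s" and npos: "0 < n"
begin

abbreviation succ :: "dcorner \<Rightarrow> dcorner" where
  "succ \<equiv> succ_corner n p s"

lemma signed_diagramD: "i < n \<Longrightarrow> p i < n \<and> p i \<noteq> i \<and> p (p i) = i \<and> s (p i) = s i"
  using sd unfolding signed_diagram_def by blast

lemma succ_fst_less: "fst x < n \<Longrightarrow> fst (succ x) < n"
  using signed_diagramD npos by (cases x) (auto simp: succ_corner_def Let_def)

lemma succ_dflip_succ: "fst x < n \<Longrightarrow> succ (dflip (succ x)) = dflip x"
proof (cases x)
  case (Pair i d)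
  assume "fst x < n"
  then have i: "i < n" using Pair by simp
  let ?k = "(i + n - 1) mod n"
  have k: "?k < n" using npos by simp
  show ?thesis
  proof (cases d)
    case True
    then show ?thesis using Pair signed_diagramD[OF i] succ_mod_pred_mod
      by (auto simp: succ_corner_def Let_def dflip_def)
  next
    case False
    then show ?thesis using Pair signed_diagramD[OF k] succ_mod_pred_mod pred_mod_succ_mod[OF i]
      by (auto simp: succ_corner_def Let_def dflip_def)
  qed
qed

lemma orbit_period_returns:
  assumes "fst x < n"
  shows "0 < orbit_period n p s x \<and> (succ ^^ orbit_period n p s x) x = x"
proof -
  let ?D = "{x :: dcorner. fst x < n}"
  have "?D = {0..<n} \<times> UNIV" by auto
  then have "finite ?D" by simp
  moreover have "inj_on succ ?D"
    by (intro inj_onI) (metis succ_dflip_succ dflip_dflip mem_Collect_eq)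
  moreover have "succ ` ?D \<subseteq> ?D" using succ_fst_less by auto
  ultimately have "\<exists>m>0. (succ ^^ m) x = x"
    using assms by (intro finite_inj_on_funpow_periodic) auto
  then show ?thesis unfolding orbit_period_def by (rule LeastI_ex)
qed

lemma cyclic_next_orbit_listD:
  assumes "fst x < n" "cyclic_next (orbit_list n p s x) a b"
  shows "fst a < n \<and> b = succ a"
proof -
  let ?P = "orbit_period n p s x"
  obtain k where k: "k < ?P" "a = (succ ^^ k) x" "b = (succ ^^ (Suc k mod ?P)) x"
    using assms(2) unfolding cyclic_next_def orbit_list_def by auto
  have "b = (succ ^^ Suc k) x"
    using k(3) funpow_mod_eq orbit_period_returns[OF assms(1)] by metis
  moreover have "fst ((succ ^^ k) x) < n"
    using assms(1) succ_fst_less by (induction k) auto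
  ultimately show ?thesis using k(2) by simp
qed

lemma cyclic_next_orbit_list_self:
  assumes "fst x < n"
  shows "cyclic_next (orbit_list n p s x) x (succ x)"
proof -
  let ?P = "orbit_period n p s x"
  have P: "0 < ?P" "(succ ^^ ?P) x = x" using orbit_period_returns[OF assms] by simp_all
  moreover have "?P = 1 \<Longrightarrow> succ x = x" using P(2) by simp
  ultimately show ?thesis
    using cyclic_next_nth[of 0 "orbit_list n p s x"]
    by (cases "?P = 1") (auto simp: orbit_list_def)
qed

lemma dc_follows_diagram_vertices_iff:
  "dc_follows (diagram_vertices n p s) a b \<longleftrightarrow> fst a < n \<and> b = succ a"
proof
  assume "dc_follows (diagram_vertices n p s) a b"
  then obtain x ys where x: "fst x < n" "ys \<in> dc_class (orbit_list n p s x)" "cyclic_next ys a b"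
    unfolding dc_follows_iff_cyclic_next diagram_vertices_def by blast
  then consider "cyclic_next (orbit_list n p s x) a b"
    | "cyclic_next (orbit_list n p s x) (dflip b) (dflip a)"
    using bex_dc_class_cyclic_next cyclic_next_revflip by blast
  then show "fst a < n \<and> b = succ a"
  proof cases
    case 1
    then show ?thesis using cyclic_next_orbit_listD[OF x(1)] by blast
  next
    case 2
    then have "fst b < n" "dflip a = succ (dflip b)"
      using cyclic_next_orbit_listD[OF x(1) 2] by simp_all
    then have "fst b < n" "a = dflip (succ (dflip b))" by (metis dflip_dflip)+
    then show ?thesis using succ_dflip_succ[of "dflip b"] succ_fst_less[of "dflip b"] by simp
  qed
next
  assume a: "fst a < n \<and> b = succ a"
  then have "cyclic_next (orbit_list n p s a) a b"
    using cyclic_next_orbit_list_self by simp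
  moreover have "dc_class (orbit_list n p s a) \<in> diagram_vertices n p s"
    using a unfolding diagram_vertices_def by blast
  ultimately show "dc_follows (diagram_vertices n p s) a b"
    unfolding dc_follows_iff_cyclic_next using self_mem_dc_class by blast
qed

lemma diagram_vertex_set_conditions:
  assumes deg: "\<forall>x. fst x < n \<longrightarrow> 3 \<le> length (orbit_list n p s x)"
  shows "vertex_set_conditions n (diagram_vertices n p s)"
proof -
  have "\<forall>c\<in>diagram_vertices n p s. \<forall>xs\<in>c. 3 \<le> length xs"
    using deg dc_class_invariants(1) unfolding diagram_vertices_def by fastforce
  moreover have "\<not> (\<exists>i<n. ((i + 1) mod n, True) = succ (i, True))"
  proof -
    have "(i + 1) mod n \<noteq> (p i + 1) mod n" if "i < n" for i
      using signed_diagramD[OF that] succ_mod_pred_mod[OF that] succ_mod_pred_mod[of "p i" n]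
      by metis
    then show ?thesis by (auto simp: succ_corner_def)
  qed
  moreover have "((i + 1) mod n, True) = succ ((j + n - 1) mod n, True)"
    if "i < n" "(j, True) = succ (i, True)" for i j
  proof -
    from that have "s i" "j = (p i + 1) mod n"
      by (auto simp: succ_corner_def split: if_splits)
    then show ?thesis
      using signed_diagramD[OF \<open>i < n\<close>] succ_mod_pred_mod by (simp add: succ_corner_def)
  qed
  moreover have "((j + 1) mod n, True) = succ ((i + 1) mod n, False)"
    if "i < n" "(j, False) = succ (i, True)" for i j
  proof -
    from that have "\<not> s i" "j = p i"
      by (auto simp: succ_corner_def split: if_splits)
    then show ?thesis using succ_mod_pred_mod[OF \<open>i < n\<close>] by (simp add: succ_corner_def)
  qed
  ultimately show ?thesis
    unfolding vertex_set_conditions_def dc_follows_diagram_vertices_iff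
    using npos by simp
qed

end

section \<open>The diagram determined by a collection\<close>

locale vertex_set_candidate = dc_partition +
  assumes npos: "0 < n"
    and degree: "\<forall>c\<in>C. \<forall>xs\<in>c. 3 \<le> length xs"
    and no_plus_step: "\<not> (\<exists>i<n. dc_follows C (i, True) ((i + 1) mod n, True))"
    and plus_plus: "\<And>i j. i < n \<Longrightarrow> j < n \<Longrightarrow> dc_follows C (i, True) (j, True) \<Longrightarrow>
          dc_follows C ((j + n - 1) mod n, True) ((i + 1) mod n, True)"
    and plus_minus: "\<And>i j. i < n \<Longrightarrow> j < n \<Longrightarrow> dc_follows C (i, True) (j, False) \<Longrightarrow>
          dc_follows C ((i + 1) mod n, False) ((j + 1) mod n, True)"
begin

definition edge_pairing :: "nat \<Rightarrow> nat" where
  "edge_pairing i = (case follower (i, True) of (j, t) \<Rightarrow> if t then (j + n - 1) mod n else j)"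

definition edge_sign :: "nat \<Rightarrow> bool" where
  "edge_sign i = snd (follower (i, True))"

lemma follower_plus_cases:
  assumes "i < n"
  obtains j where "j < n" "dc_follows C (i, True) (j, True)"
      "edge_pairing i = (j + n - 1) mod n" "edge_sign i"
  | j where "j < n" "dc_follows C (i, True) (j, False)" "edge_pairing i = j" "\<not> edge_sign i"
proof -
  obtain j t where jt: "follower (i, True) = (j, t)" by fastforce
  then have "dc_follows C (i, True) (j, t)" using dc_follows_follower[of "(i, True)"] assms by simp
  moreover from this have "j < n" using dc_follows_fst_less by fastforce
  ultimately show thesis using that jt by (cases t) (simp_all add: edge_pairing_def edge_sign_def)
qed

lemma signed_diagram_edge_pairing: "signed_diagram n edge_pairing edge_sign"
  unfolding signed_diagram_def
proof (intro allI impI)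
  fix i assume i: "i < n"
  then show "edge_pairing i < n \<and> edge_pairing i \<noteq> i \<and> edge_pairing (edge_pairing i) = i \<and>
    edge_sign (edge_pairing i) = edge_sign i"
  proof (cases rule: follower_plus_cases)
    case (1 j)
    then have "dc_follows C (edge_pairing i, True) ((i + 1) mod n, True)"
      using plus_plus i by simp
    then have "edge_pairing (edge_pairing i) = i" "edge_sign (edge_pairing i)"
      using follower_eqI succ_mod_pred_mod[OF i] by (simp_all add: edge_pairing_def edge_sign_def)
    moreover have "edge_pairing i \<noteq> i"
    proof
      assume "edge_pairing i = i"
      then have "j = (i + 1) mod n" using 1 pred_mod_succ_mod[of j n] by simp
      then show False using 1 no_plus_step i by auto
    qed
    ultimately show ?thesis using 1 npos by simp
  next
    case (2 j)
    then have "dc_follows C (j, True) (i, False)"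
      using dc_follows_dflip by (fastforce simp: dflip_def)
    then have "follower (j, True) = (i, False)" by (rule follower_eqI)
    moreover have "j \<noteq> i" using 2 dc_follows_fst_neq degree by fastforce
    ultimately show ?thesis using 2 by (simp add: edge_pairing_def edge_sign_def)
  qed
qed

lemma succ_corner_eq_follower:
  assumes "fst x < n"
  shows "succ_corner n edge_pairing edge_sign x = follower x"
proof (cases x)
  case (Pair i d)
  show ?thesis
  proof (cases d)
    case True
    have "i < n" using assms Pair by simp
    then show ?thesis
    proof (cases rule: follower_plus_cases)
      case (1 j)
      then show ?thesis using Pair True follower_eqI pred_mod_succ_mod
        by (simp add: succ_corner_def)
    next
      case (2 j)
      then show ?thesis using Pair True follower_eqI by (simp add: succ_corner_def)
    qed
  next
    case False
    let ?k = "(i + n - 1) mod n"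
    have i: "i < n" using assms Pair by simp
    have "?k < n" using npos by simp
    then show ?thesis
    proof (cases rule: follower_plus_cases)
      case (1 m)
      then have "dc_follows C ((m + n - 1) mod n, True) (i, True)"
        using plus_plus[OF \<open>?k < n\<close> 1(1,2)] pred_mod_succ_mod[OF i] by simp
      then have "follower (i, False) = ((m + n - 1) mod n, False)"
        using dc_follows_dflip follower_eqI by (fastforce simp: dflip_def)
      then show ?thesis using 1 Pair False by (simp add: succ_corner_def)
    next
      case (2 m)
      then have "dc_follows C (i, False) ((m + 1) mod n, True)"
        using plus_minus[OF \<open>?k < n\<close> 2(1,2)] pred_mod_succ_mod[OF i] by simp
      then show ?thesis using 2 Pair False follower_eqI by (simp add: succ_corner_def)
    qed
  qed
qed

lemma orbit_list_in_class:
  assumes "dc_class xs \<in> C" "fst x \<in> fst ` set xs"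
  shows "orbit_list n edge_pairing edge_sign x \<in> dc_class xs"
proof -
  obtain ys where ys: "ys \<in> dc_class xs" "hd ys = x"
    using dc_class_starting_at[OF assms(2)] by blast
  obtain zs where zs: "dc_class xs = dc_class zs" "distinct (map fst zs)" "fst ` set zs \<subseteq> {0..<n}"
    using assms(1) by (rule dc_collection_memE)
  have "distinct (map fst ys)" "fst ` set ys \<subseteq> {0..<n}"
    using ys(1) zs dc_class_invariants(2,3) by auto
  moreover have "3 \<le> length ys" using degree assms(1) ys(1) by blast
  moreover have "succ_corner n edge_pairing edge_sign (ys ! j) = ys ! (Suc j mod length ys)"
    if "j < length ys" for j
  proof -
    have "\<exists>us\<in>dc_class xs. cyclic_next us (ys ! j) (ys ! (Suc j mod length ys))"
      using cyclic_next_nth[OF that] ys(1) by blast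
    then have "dc_follows C (ys ! j) (ys ! (Suc j mod length ys))"
      using assms(1) unfolding dc_follows_iff_cyclic_next by blast
    moreover have "fst (ys ! j) < n" using dc_follows_fst_less[OF calculation] by simp
    ultimately show ?thesis using succ_corner_eq_follower follower_eqI by simp
  qed
  ultimately have "orbit_list n edge_pairing edge_sign x = ys"
    using ys(2) by (intro orbit_list_eqI) (auto simp: distinct_map)
  then show ?thesis using ys(1) by simp
qed

lemma is_vertex_set_collection: "is_vertex_set n C"
  unfolding is_vertex_set_def
proof (intro exI conjI allI impI)
  show "signed_diagram n edge_pairing edge_sign" by (rule signed_diagram_edge_pairing)
next
  fix x :: dcorner assume "fst x < n"
  then obtain xs where "dc_class xs \<in> C" "fst x \<in> fst ` set xs"
    by (elim dc_collection_coverE)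
  then have "orbit_list n edge_pairing edge_sign x \<in> dc_class xs" by (rule orbit_list_in_class)
  then show "3 \<le> length (orbit_list n edge_pairing edge_sign x)"
    using degree \<open>dc_class xs \<in> C\<close> by blast
next
  show "C = diagram_vertices n edge_pairing edge_sign"
  proof (intro equalityI subsetI)
    fix c assume "c \<in> C"
    then obtain xs where xs: "c = dc_class xs" "fst ` set xs \<subseteq> {0..<n}"
      by (elim dc_collection_memE)
    have "xs \<noteq> []" using degree \<open>c \<in> C\<close> xs(1) self_mem_dc_class by fastforce
    then have hd: "fst (hd xs) \<in> fst ` set xs" by simp
    then have "fst (hd xs) < n" using xs(2) by auto
    have "orbit_list n edge_pairing edge_sign (hd xs) \<in> dc_class xs"
      using \<open>c \<in> C\<close> xs(1) orbit_list_in_class hd by simp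
    then have "dc_class (orbit_list n edge_pairing edge_sign (hd xs)) = c"
      using xs(1) by (simp add: dc_class_eq)
    then show "c \<in> diagram_vertices n edge_pairing edge_sign"
      using \<open>fst (hd xs) < n\<close> unfolding diagram_vertices_def by blast
  next
    fix v assume "v \<in> diagram_vertices n edge_pairing edge_sign"
    then obtain x where x: "fst x < n" "v = dc_class (orbit_list n edge_pairing edge_sign x)"
      unfolding diagram_vertices_def by blast
    then obtain xs where "dc_class xs \<in> C" "fst x \<in> fst ` set xs"
      by (elim dc_collection_coverE)
    then have "orbit_list n edge_pairing edge_sign x \<in> dc_class xs" by (rule orbit_list_in_class)
    then have "v = dc_class xs" using x(2) by (simp add: dc_class_eq)
    then show "v \<in> C" using \<open>dc_class xs \<in> C\<close> by simp
  qed
qed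

end

lemma is_vertex_set_iff_conditions:
  assumes "0 < n" "dc_collection n C"
  shows "is_vertex_set n C \<longleftrightarrow> vertex_set_conditions n C"
proof
  assume "is_vertex_set n C"
  then obtain p s where "signed_diagram n p s" "\<forall>x. fst x < n \<longrightarrow> 3 \<le> length (orbit_list n p s x)"
    and "C = diagram_vertices n p s"
    unfolding is_vertex_set_def by blast
  then show "vertex_set_conditions n C"
    using planar_diagram.diagram_vertex_set_conditions planar_diagram.intro assms(1) by blast
next
  assume "vertex_set_conditions n C"
  then interpret vertex_set_candidate n C
    using assms by unfold_locales (auto simp: vertex_set_conditions_def)
  show "is_vertex_set n C" by (rule is_vertex_set_collection)
qed

theorem proposition3p1:
  fixes n e :: nat and C :: "dcorner list set set"
  assumes "n = 2 * e" and "0 < n"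
    and "dc_collection n C"
  shows "is_vertex_set n C \<longleftrightarrow>
     ((\<forall>c\<in>C. \<forall>xs\<in>c. 3 \<le> length xs) \<and>
      (\<not> (\<exists>i<n. dc_follows C (i, True) ((i + 1) mod n, True))) \<and>
      (\<forall>i<n. \<forall>j<n. dc_follows C (i, True) (j, True) \<longrightarrow>
          dc_follows C ((j + n - 1) mod n, True) ((i + 1) mod n, True)) \<and>
      (\<forall>i<n. \<forall>j<n. dc_follows C (i, True) (j, False) \<longrightarrow>
          dc_follows C ((i + 1) mod n, False) ((j + 1) mod n, True)))"
  using is_vertex_set_iff_conditions[OF assms(2,3)] unfolding vertex_set_conditions_def .

end
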